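(* Let $H=\left(\frac{3,-1}{\mathbb{Q}}\right)$ and let $d>0$ be a square-free integer for which the set $S_d=\{xI+yJ+zK: (x,y,z)\in\mathbb{Z}^3,\ 3x^2-y^2+3z^2=d\}$ is infinite. Let $\varphi_d:\mathbb{N}\to S_d$ be a bijection, and let $a,b>0$ be rational numbers such that $a+b\sqrt{d}$ is a unit of $\mathbb{Q}(\sqrt d)$ of infinite order. Define $\psi_d:\mathbb{N}^2\to H$ by $\psi_d(t,m)=\left(a+b\,\varphi_d(t)\right)^m$. Then the restriction of $\psi_d$ to $\mathbb{N}\times(\mathbb{N}\setminus\{0\})$ is injective.
   Context: $\mathbb{N}=\{0,1,2,\dots\}$. $H=\left(\frac{3,-1}{\mathbb{Q}}\right)$ is the quaternion $\mathbb{Q}$-algebra with basis $1,I,J,K=IJ$ and relations $I^2=3$, $J^2=-1$, $IJ=-JI$; the reduced norm of $x_0+xI+yJ+zK$ is $x_0^2-3x^2+y^2-3z^2$. Elements $xI+yJ+zK$ are called pure quaternions; a pure quaternion $\omega\in S_d$ has reduced norm $-d$ and satisfies $\omega^2=d$. *)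

theory Defs
  imports Complex_Main "HOL-Computational_Algebra.Squarefree"
begin

text \<open>The quaternion algebra H = (3,-1 / Q) with basis 1, I, J, K = IJ,
  I^2 = 3, J^2 = -1, IJ = -JI.  An element HQ x0 x y z stands for
  x0 + x I + y J + z K.\<close>

datatype hquat = HQ rat rat rat rat

fun hq_mult :: "hquat \<Rightarrow> hquat \<Rightarrow> hquat" where
  "hq_mult (HQ a0 a1 a2 a3) (HQ b0 b1 b2 b3) =
     HQ (a0*b0 + 3*a1*b1 - a2*b2 + 3*a3*b3)
        (a0*b1 + a1*b0 + a2*b3 - a3*b2)
        (a0*b2 + a2*b0 + 3*a1*b3 - 3*a3*b1)
        (a0*b3 + a3*b0 + a1*b2 - a2*b1)"

definition hq_one :: hquat where "hq_one = HQ 1 0 0 0"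

primrec hq_pow :: "hquat \<Rightarrow> nat \<Rightarrow> hquat" where
  "hq_pow q 0 = hq_one"
| "hq_pow q (Suc n) = hq_mult q (hq_pow q n)"

fun hq_norm :: "hquat \<Rightarrow> rat" where
  "hq_norm (HQ x0 x y z) = x0^2 - 3*x^2 + y^2 - 3*z^2"

definition hq_scalar :: "rat \<Rightarrow> hquat" where "hq_scalar c = HQ c 0 0 0"

fun hq_add :: "hquat \<Rightarrow> hquat \<Rightarrow> hquat" where
  "hq_add (HQ a0 a1 a2 a3) (HQ b0 b1 b2 b3) = HQ (a0+b0) (a1+b1) (a2+b2) (a3+b3)"

fun hq_smult :: "rat \<Rightarrow> hquat \<Rightarrow> hquat" where
  "hq_smult c (HQ a0 a1 a2 a3) = HQ (c*a0) (c*a1) (c*a2) (c*a3)"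

definition S :: "int \<Rightarrow> hquat set" where
  "S d = {HQ 0 (of_int x) (of_int y) (of_int z) | x y z :: int.
            3*x^2 - y^2 + 3*z^2 = d}"

definition infinite_order_qsqrt :: "int \<Rightarrow> rat \<Rightarrow> rat \<Rightarrow> bool" where
  "infinite_order_qsqrt d a b \<longleftrightarrow>
     (of_rat a + of_rat b * sqrt (of_int d) :: real) \<noteq> 0 \<and>
     (\<forall>m::nat. m > 0 \<longrightarrow> (of_rat a + of_rat b * sqrt (of_int d) :: real) ^ m \<noteq> 1)"

end

theory Submission
  imports Defs
begin

text \<open>A pure quaternion \<omega> with 3x^2 - y^2 + 3z^2 = d satisfies \<omega>^2 = d, so the subalgebra
  generated by \<omega> is a copy of \<open>\<rat>(\<surd>d)\<close>: the power (a + b\<omega>)^m equals A + B\<omega>, where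
  (a + b\<surd>d)^m = A + B\<surd>d, and B > 0 when a, b > 0 and m > 0. Hence \<psi>(t,m) determines B
  (via the reduced norm of its pure part, B^2 d), then \<phi>(t) and thus t, and finally
  (a + b\<surd>d)^m; as a + b\<surd>d has infinite order, this determines m.\<close>

fun qsqrt_pow :: "rat \<Rightarrow> rat \<Rightarrow> rat \<Rightarrow> nat \<Rightarrow> rat \<times> rat" where
  "qsqrt_pow a b d 0 = (1, 0)"
| "qsqrt_pow a b d (Suc m) =
     (a * fst (qsqrt_pow a b d m) + d * b * snd (qsqrt_pow a b d m),
      a * snd (qsqrt_pow a b d m) + b * fst (qsqrt_pow a b d m))"

lemma real_qsqrt_pow:
  assumes "d \<ge> 0"
  shows "(of_rat a + of_rat b * sqrt (of_rat d) :: real) ^ m =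
           of_rat (fst (qsqrt_pow a b d m)) + of_rat (snd (qsqrt_pow a b d m)) * sqrt (of_rat d)"
proof (induction m)
  case 0
  then show ?case by simp
next
  case (Suc m)
  define r where "r = sqrt (of_rat d)"
  have "r * r = of_rat d"
    using assms by (simp add: r_def)
  with Suc show ?case
    by (simp add: of_rat_add of_rat_mult algebra_simps flip: r_def)
qed

lemma qsqrt_pow_pos:
  assumes "a > 0" "b > 0" "d > 0"
  shows "fst (qsqrt_pow a b d m) > 0 \<and> (m > 0 \<longrightarrow> snd (qsqrt_pow a b d m) > 0)"
proof (induction m)
  case 0
  then show ?case by simp
next
  case (Suc m)
  then have "fst (qsqrt_pow a b d m) > 0" "snd (qsqrt_pow a b d m) \<ge> 0"
    by (cases m; simp)+
  with assms show ?case
    by (simp add: add_pos_nonneg add_nonneg_pos)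
qed

lemma hq_pow_scalar_plus_pure:
  assumes "3*x^2 - y^2 + 3*z^2 = d"
  shows "hq_pow (hq_add (hq_scalar a) (hq_smult b (HQ 0 x y z))) m =
           hq_add (hq_scalar (fst (qsqrt_pow a b d m)))
                  (hq_smult (snd (qsqrt_pow a b d m)) (HQ 0 x y z))"
proof (induction m)
  case 0
  then show ?case by (simp add: hq_one_def hq_scalar_def)
next
  case (Suc m)
  then show ?case
    by (simp add: hq_scalar_def flip: assms) (simp add: algebra_simps power2_eq_square)
qed

lemma scalar_plus_pure_cancel:
  assumes "hq_add (hq_scalar A) (hq_smult B (HQ 0 x y z)) =
           hq_add (hq_scalar A') (hq_smult B' (HQ 0 x' y' z'))"
    and "3*x^2 - y^2 + 3*z^2 = d" "3*x'^2 - y'^2 + 3*z'^2 = d"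
    and "d \<noteq> 0" "B > 0" "B' > 0"
  shows "A = A' \<and> B = B' \<and> HQ 0 x y z = HQ 0 x' y' z'"
proof -
  have eqs: "A = A'" "B * x = B' * x'" "B * y = B' * y'" "B * z = B' * z'"
    using assms(1) by (simp_all add: hq_scalar_def)
  have "B^2 * d = 3*(B*x)^2 - (B*y)^2 + 3*(B*z)^2"
    by (simp add: algebra_simps power_mult_distrib flip: assms(2))
  also have "\<dots> = 3*(B'*x')^2 - (B'*y')^2 + 3*(B'*z')^2"
    by (simp only: eqs)
  also have "\<dots> = B'^2 * d"
    by (simp add: algebra_simps power_mult_distrib flip: assms(3))
  finally have "B = B'"
    using assms(4-6) by (simp add: power2_eq_iff)
  with eqs assms(5) show ?thesis
    by auto
qed

lemma power_eq_imp_exp_eq: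
  fixes u :: "'a :: idom"
  assumes "u \<noteq> 0" "\<And>k. k > 0 \<Longrightarrow> u ^ k \<noteq> 1" "u ^ m = u ^ n"
  shows "m = n"
proof -
  have "m \<le> n" if "u ^ m = u ^ n" for m n
  proof (rule ccontr)
    assume "\<not> m \<le> n"
    then have "u ^ n * u ^ (m - n) = u ^ n * 1"
      using that by (simp flip: power_add)
    then have "u ^ (m - n) = 1"
      using assms(1) by simp
    with \<open>\<not> m \<le> n\<close> assms(2) show False
      by simp
  qed
  with assms(3) show ?thesis
    by (metis antisym)
qed

lemma qsqrt_pow_inj:
  assumes "infinite_order_qsqrt d a b" "d > 0"
    and "qsqrt_pow a b (of_int d) m = qsqrt_pow a b (of_int d) n"
  shows "m = n"
proof -
  define u where "u = (of_rat a + of_rat b * sqrt (of_int d) :: real)"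
  have "u ^ m = u ^ n"
    using real_qsqrt_pow[of "of_int d" a b] assms(2,3) by (simp add: u_def)
  moreover have "u \<noteq> 0" "\<And>k. k > 0 \<Longrightarrow> u ^ k \<noteq> 1"
    using assms(1) by (auto simp: infinite_order_qsqrt_def u_def)
  ultimately show ?thesis
    using power_eq_imp_exp_eq by blast
qed

theorem mainTheorem4:
  fixes d :: int and a b :: rat and \<phi> :: "nat \<Rightarrow> hquat" and \<psi> :: "nat \<times> nat \<Rightarrow> hquat"
  assumes "d > 0" and "squarefree d"
    and "infinite (S d)"
    and "bij_betw \<phi> UNIV (S d)"
    and "a > 0" and "b > 0"
    and "infinite_order_qsqrt d a b"
    and "\<And>t m. \<psi> (t, m) = hq_pow (hq_add (hq_scalar a) (hq_smult b (\<phi> t))) m"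
  shows "inj_on \<psi> (UNIV \<times> {m. m \<noteq> 0})"
proof (rule inj_onI, clarsimp)
  fix t m t' m'
  assume "m > 0" "m' > 0" and "\<psi> (t, m) = \<psi> (t', m')"
  have pure: "\<exists>x y z. \<phi> t = HQ 0 x y z \<and> 3*x^2 - y^2 + 3*z^2 = of_int d" for t
    using bij_betwE[OF assms(4)] unfolding S_def by fastforce
  obtain x y z x' y' z' where
    \<phi>: "\<phi> t = HQ 0 x y z" "\<phi> t' = HQ 0 x' y' z'" and
    norm: "3*x^2 - y^2 + 3*z^2 = of_int d" "3*x'^2 - y'^2 + 3*z'^2 = of_int d"
    using pure[of t] pure[of t'] by blast
  define P where "P = qsqrt_pow a b (of_int d)"
  have "hq_add (hq_scalar (fst (P m))) (hq_smult (snd (P m)) (HQ 0 x y z)) =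
        hq_add (hq_scalar (fst (P m'))) (hq_smult (snd (P m')) (HQ 0 x' y' z'))"
    using \<open>\<psi> (t, m) = \<psi> (t', m')\<close>
    by (simp only: assms(8) \<phi> P_def hq_pow_scalar_plus_pure[OF norm(1)]
        hq_pow_scalar_plus_pure[OF norm(2)])
  moreover have "snd (P k) > 0" if "k > 0" for k
    using qsqrt_pow_pos[of a b "of_int d" k] assms(1,5,6) that by (simp add: P_def)
  ultimately have "P m = P m' \<and> \<phi> t = \<phi> t'"
    using scalar_plus_pure_cancel[OF _ norm] assms(1) \<open>m > 0\<close> \<open>m' > 0\<close>
    by (simp add: \<phi> prod_eq_iff)
  then show "t = t' \<and> m = m'"
    using qsqrt_pow_inj[OF assms(7,1)] bij_betw_imp_inj_on[OF assms(4)]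
    by (auto simp: P_def dest: injD)
qed

end
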